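(* Run UBEV-S on a contextual-bandit MDP $\mathcal M_C$ (see context). Outside of the failure event, UBEV-S has at most $\tilde O\!\left(\frac{SAH}{\mu_{\min}}\right)$ non-good episodes, where $\mu_{\min}=\min_s\mu(s)$.
   Context: $\mathcal M_C$ is a finite-horizon episodic MDP (finite state set with $S$ states, $A$ actions, horizon $H$, mean rewards in $[0,1]$) whose transitions satisfy $p(s'\mid s,a)=\mu(s')$ for all $s,a$, for a fixed distribution $\mu$ on states with $\mu_{\min}=\min_s\mu(s)>0$. UBEV-S (failure tolerance $\delta\in(0,1]$) is an optimistic algorithm that in each episode $k$ plays a policy $\pi_k$ mapping (state, timestep) to actions; $n_k(s,a)$ is the total number of visits to $(s,a)$ (aggregated over timesteps) before episode $k$; $w_{tk}(s,a)$ is the probability, in episode $k$ under $\pi_k$, of being in state $s$ at step $t$ and taking $a$. Outside of the failure event, in particular, $n_k(s,a)\ge\frac12\sum_{i<k}\sum_{t\in[H]}w_{ti}(s,a)-H\ln\frac{9SA}{\delta}$ for all $k,s,a$. Episode $k$ is good if the failure event does not occur and $n_k(s,\pi_k(s,t))\ge\frac14\sum_{i<k}\sum_{\tau\in[H]}w_{\tau i}(s,\pi_k(s,t))$ for all states $s$ and timesteps $t$; otherwise it is non-good. $\tilde O(\cdot)$ hides constants and factors polylogarithmic in quantities polynomial in $S,A,H,K,1/\delta$. *)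

theory Defs
  imports Complex_Main
begin

text \<open>Finite-horizon episodic MDP with finite state set Sts and finite action set Acts
  (states and actions encoded as natural numbers so that S and A can be quantified
  inside the statement).
  p0: initial state distribution; P s a s': transition probability.
  Timesteps are 1..H.\<close>

fun state_dist :: "nat set \<Rightarrow> (nat \<Rightarrow> real) \<Rightarrow> (nat \<Rightarrow> nat \<Rightarrow> nat \<Rightarrow> real)
                    \<Rightarrow> (nat \<Rightarrow> nat \<Rightarrow> nat) \<Rightarrow> nat \<Rightarrow> nat \<Rightarrow> real" where
  "state_dist Sts p0 P pol 0 s = 0"
| "state_dist Sts p0 P pol (Suc 0) s = p0 s"
| "state_dist Sts p0 P pol (Suc (Suc t)) s' =
     (\<Sum>s\<in>Sts. state_dist Sts p0 P pol (Suc t) s * P s (pol s (Suc t)) s')"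

definition occ :: "nat set \<Rightarrow> (nat \<Rightarrow> real) \<Rightarrow> (nat \<Rightarrow> nat \<Rightarrow> nat \<Rightarrow> real)
                    \<Rightarrow> (nat \<Rightarrow> nat \<Rightarrow> nat) \<Rightarrow> nat \<Rightarrow> nat \<Rightarrow> nat \<Rightarrow> real" where
  "occ Sts p0 P pol t s a = state_dist Sts p0 P pol t s * (if pol s t = a then 1 else 0)"

end

theory Submission
  imports Defs
begin

text \<open>Since transitions ignore the current state and action, every policy is in state s
  at every step with probability \<mu> s. Hence each episode that plays a in s at some step adds
  at least m = min \<mu> to the expected visit mass of (s, a). Outside the failure event
  n \<ge> mass/2 - L, so an episode can be non-good, i.e. n < mass/4 for some pair (s, a) it
  plays, only while the mass accumulated for that pair is below 4 L, where
  L = H ln (9 S A / \<delta>). Consequently each pair is responsible for at most 4 L / m + 1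
  non-good episodes.\<close>

lemma Min_image_le_sum:
  fixes f :: "'a \<Rightarrow> 'b::linordered_semidom"
  assumes "finite A" and "A \<noteq> {}" and "\<And>x. x \<in> A \<Longrightarrow> f x \<ge> 0"
  shows "Min (f ` A) \<le> sum f A"
proof -
  obtain x where "x \<in> A"
    using \<open>A \<noteq> {}\<close> by blast
  then have "Min (f ` A) \<le> f x"
    using \<open>finite A\<close> by simp
  also have "\<dots> \<le> sum f A"
    using assms \<open>x \<in> A\<close> by (intro member_le_sum) auto
  finally show ?thesis .
qed

lemma card_le_of_prefix_sums_bounded:
  fixes f :: "nat \<Rightarrow> real"
  assumes "finite B" and "B \<subseteq> {1..}" and "m > 0" and "M \<ge> 0"
    and f_nonneg: "\<And>i. f i \<ge> 0" and f_ge: "\<And>i. i \<in> B \<Longrightarrow> f i \<ge> m"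
    and prefix_less: "\<And>k. k \<in> B \<Longrightarrow> (\<Sum>i\<in>{1..<k}. f i) < M"
  shows "real (card B) \<le> M / m + 1"
proof (cases "B = {}")
  case True
  then show ?thesis using assms by simp
next
  case False
  define k where "k = Max B"
  have "k \<in> B" using False \<open>finite B\<close> by (simp add: k_def)
  have earlier: "B - {k} \<subseteq> {1..<k}"
    using \<open>finite B\<close> \<open>B \<subseteq> {1..}\<close> by (fastforce simp: k_def intro: le_neq_implies_less)
  have "(real (card B) - 1) * m = real (card (B - {k})) * m"
    using \<open>k \<in> B\<close> \<open>finite B\<close> False by (simp add: of_nat_diff Suc_leI card_gt_0_iff)
  also have "\<dots> \<le> (\<Sum>i\<in>B - {k}. f i)"
    using sum_bounded_below[of "B - {k}" m f] f_ge by auto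
  also have "\<dots> \<le> (\<Sum>i\<in>{1..<k}. f i)"
    using earlier f_nonneg by (intro sum_mono2) auto
  also have "\<dots> < M"
    using prefix_less \<open>k \<in> B\<close> .
  finally show ?thesis
    using \<open>m > 0\<close> by (simp add: field_simps)
qed

lemma card_episodes_with_small_prefix_mass_le:
  fixes f :: "'s \<Rightarrow> 'a \<Rightarrow> nat \<Rightarrow> real" and \<pi> :: "nat \<Rightarrow> 's \<Rightarrow> 't \<Rightarrow> 'a"
  assumes "finite S" and "finite A" and "m > 0" and "M \<ge> 0"
    and f_nonneg: "\<And>s a i. s \<in> S \<Longrightarrow> f s a i \<ge> 0"
    and f_ge: "\<And>s t i. s \<in> S \<Longrightarrow> t \<in> T \<Longrightarrow> f s (\<pi> i s t) i \<ge> m"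
    and \<pi>_range: "\<And>i s t. s \<in> S \<Longrightarrow> t \<in> T \<Longrightarrow> \<pi> i s t \<in> A"
  shows "real (card {k\<in>{1..K}. \<exists>s\<in>S. \<exists>t\<in>T. (\<Sum>i\<in>{1..<k}. f s (\<pi> k s t) i) < M})
           \<le> real (card S) * real (card A) * (M / m + 1)"
    (is "real (card ?E) \<le> _")
proof -
  define B where "B s a = {k\<in>{1..K}. (\<exists>t\<in>T. \<pi> k s t = a) \<and> (\<Sum>i\<in>{1..<k}. f s a i) < M}"
    for s a
  have card_B: "real (card (B s a)) \<le> M / m + 1" if "s \<in> S" for s a
    using assms that
    by (intro card_le_of_prefix_sums_bounded[where f = "f s a"]) (auto simp: B_def)
  have "?E \<subseteq> (\<Union>(s, a)\<in>S \<times> A. B s a)"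
    using \<pi>_range by (fastforce simp: B_def)
  then have "real (card ?E) \<le> real (card (\<Union>(s, a)\<in>S \<times> A. B s a))"
    using assms by (intro of_nat_mono card_mono) (auto simp: B_def)
  also have "\<dots> \<le> (\<Sum>(s, a)\<in>S \<times> A. real (card (B s a)))"
    using card_UN_le[of "S \<times> A" "\<lambda>(s, a). B s a"] assms
    by (simp add: split_def flip: of_nat_sum)
  also have "\<dots> \<le> (\<Sum>(s, a)\<in>S \<times> A. M / m + 1)"
    using card_B by (intro sum_mono) auto
  also have "\<dots> = real (card S) * real (card A) * (M / m + 1)"
    by (simp add: card_cartesian_product)
  finally show ?thesis .
qed

lemma state_dist_state_independent:
  assumes "(\<Sum>s\<in>Sts. \<mu> s) = 1" and "\<forall>s\<in>Sts. p0 s = \<mu> s"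
    and "\<forall>s\<in>Sts. \<forall>a\<in>Acts. \<forall>s'\<in>Sts. P s a s' = \<mu> s'"
    and "\<And>s t. s \<in> Sts \<Longrightarrow> t \<in> {1..H} \<Longrightarrow> pol s t \<in> Acts"
  shows "Suc t \<le> H \<Longrightarrow> s \<in> Sts \<Longrightarrow> state_dist Sts p0 P pol (Suc t) s = \<mu> s"
proof (induction t arbitrary: s)
  case 0
  then show ?case using assms by simp
next
  case (Suc t)
  have "state_dist Sts p0 P pol (Suc (Suc t)) s
          = (\<Sum>x\<in>Sts. state_dist Sts p0 P pol (Suc t) x * P x (pol x (Suc t)) s)"
    by simp
  also have "\<dots> = (\<Sum>x\<in>Sts. \<mu> x * \<mu> s)"
    using Suc assms by (intro sum.cong) auto
  also have "\<dots> = \<mu> s"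
    using assms by (simp add: sum_distrib_right[symmetric])
  finally show ?case .
qed

lemma sum_occ_state_independent:
  assumes "(\<Sum>s\<in>Sts. \<mu> s) = 1" and "\<forall>s\<in>Sts. p0 s = \<mu> s"
    and "\<forall>s\<in>Sts. \<forall>a\<in>Acts. \<forall>s'\<in>Sts. P s a s' = \<mu> s'"
    and "\<And>s t. s \<in> Sts \<Longrightarrow> t \<in> {1..H} \<Longrightarrow> pol s t \<in> Acts"
    and "s \<in> Sts"
  shows "(\<Sum>t\<in>{1..H}. occ Sts p0 P pol t s a) = \<mu> s * real (card {t\<in>{1..H}. pol s t = a})"
proof -
  have "state_dist Sts p0 P pol t s = \<mu> s" if "t \<in> {1..H}" for t
    using state_dist_state_independent[OF assms(1-3), where pol = pol and t = "t - 1"]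
      assms(4,5) that
    by force
  then have "occ Sts p0 P pol t s a = (if pol s t = a then \<mu> s else 0)" if "t \<in> {1..H}" for t
    using that by (simp add: occ_def)
  then show ?thesis
    by (simp add: sum.If_cases Int_def)
qed

lemma sum_occ_ge_Min:
  assumes "finite Sts" and "\<forall>s\<in>Sts. \<mu> s \<ge> 0" and "(\<Sum>s\<in>Sts. \<mu> s) = 1"
    and "\<forall>s\<in>Sts. p0 s = \<mu> s" and "\<forall>s\<in>Sts. \<forall>a\<in>Acts. \<forall>s'\<in>Sts. P s a s' = \<mu> s'"
    and "\<And>s t. s \<in> Sts \<Longrightarrow> t \<in> {1..H} \<Longrightarrow> pol s t \<in> Acts"
    and "s \<in> Sts" and "t \<in> {1..H}"
  shows "(\<Sum>\<tau>\<in>{1..H}. occ Sts p0 P pol \<tau> s (pol s t)) \<ge> Min (\<mu> ` Sts)"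
proof -
  have "card {\<tau>\<in>{1..H}. pol s \<tau> = pol s t} \<ge> 1"
    using \<open>t \<in> {1..H}\<close> by (simp add: Suc_le_eq card_gt_0_iff) blast
  then have "\<mu> s * 1 \<le> \<mu> s * real (card {\<tau>\<in>{1..H}. pol s \<tau> = pol s t})"
    using assms by (intro mult_left_mono) auto
  moreover have "Min (\<mu> ` Sts) \<le> \<mu> s"
    using assms by simp
  ultimately show ?thesis
    using sum_occ_state_independent[OF assms(3-7)] by simp
qed

lemma ln_mult_9_le:
  fixes x y \<delta> :: real
  assumes "x > 0" and "y \<ge> 1" and "\<delta> > 0"
  shows "ln (9 * x / \<delta>) \<le> 8 + ln (x * y / \<delta>)"
proof -
  have "ln (9 * x / \<delta>) = ln 9 + ln (x / \<delta>)"
    using ln_mult[of 9 "x / \<delta>"] assms by simp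
  also have "ln (9::real) \<le> 8"
    using ln_le_minus_one[of 9] by simp
  also have "ln (x / \<delta>) \<le> ln (x * y / \<delta>)"
    using assms by (simp add: divide_right_mono mult_le_cancel_left1)
  finally show ?thesis by simp
qed

lemma count_bound_le_polylog:
  fixes S A H K \<delta> m :: real
  assumes "S \<ge> 1" and "A \<ge> 1" and "H \<ge> 1" and "K \<ge> 1"
    and "0 < \<delta>" and "\<delta> \<le> 1" and "0 < m" and "m \<le> 1"
  shows "S * A * (4 * (H * ln (9 * S * A / \<delta>)) / m + 1)
           \<le> 40 * (S * A * H / m) * (1 + ln (S * A * H * K / \<delta>))"
proof -
  define X where "X = ln (S * A * H * K / \<delta>)"
  have "S * A * H * K \<ge> 1 * 1 * 1 * 1"
    using assms by (intro mult_mono) auto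
  then have "X \<ge> 0"
    using assms by (simp add: X_def)
  have "H * K \<ge> 1 * 1"
    using assms by (intro mult_mono) auto
  then have "ln (9 * S * A / \<delta>) \<le> 8 + X"
    using ln_mult_9_le[of "S * A" "H * K" \<delta>] assms by (simp add: X_def mult.assoc)
  then have "4 * (H * ln (9 * S * A / \<delta>)) / m + 1 \<le> 4 * (H * (8 + X)) / m + H / m"
    using assms by (intro add_mono divide_right_mono mult_left_mono) auto
  also have "\<dots> = H / m * (33 + 4 * X)"
    using assms by (simp add: field_simps)
  also have "\<dots> \<le> H / m * (40 * (1 + X))"
    using assms \<open>X \<ge> 0\<close> by (intro mult_left_mono) auto
  finally have "S * A * (4 * (H * ln (9 * S * A / \<delta>)) / m + 1) \<le> S * A * (H / m * (40 * (1 + X)))"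
    using assms by (intro mult_left_mono) auto
  then show ?thesis
    by (simp add: X_def mult_ac)
qed

lemma card_non_good_episodes_le:
  assumes "finite Sts" and "Sts \<noteq> {}" and "finite Acts" and "Acts \<noteq> {}"
    and \<mu>_nonneg: "\<forall>s\<in>Sts. \<mu> s \<ge> 0" and \<mu>_sum: "(\<Sum>s\<in>Sts. \<mu> s) = 1"
    and \<mu>_min: "Min (\<mu> ` Sts) > 0"
    and p0: "\<forall>s\<in>Sts. p0 s = \<mu> s" and P: "\<forall>s\<in>Sts. \<forall>a\<in>Acts. \<forall>s'\<in>Sts. P s a s' = \<mu> s'"
    and \<pi>_range: "\<forall>k s t. s \<in> Sts \<longrightarrow> t \<in> {1..H} \<longrightarrow> \<pi> k s t \<in> Acts"
    and "H \<ge> 1" and "0 < \<delta>" and "\<delta> \<le> 1"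
    and visits_ge: "\<forall>k. \<forall>s\<in>Sts. \<forall>a\<in>Acts. real (n k s a) \<ge>
        1/2 * (\<Sum>i\<in>{1..<k}. \<Sum>t\<in>{1..H}. occ Sts p0 P (\<pi> i) t s a)
        - real H * ln (9 * real (card Sts) * real (card Acts) / \<delta>)"
  shows "real (card {k\<in>{1..K}. \<exists>s\<in>Sts. \<exists>t\<in>{1..H}.
            real (n k s (\<pi> k s t)) <
              1/4 * (\<Sum>i\<in>{1..<k}. \<Sum>\<tau>\<in>{1..H}. occ Sts p0 P (\<pi> i) \<tau> s (\<pi> k s t))})
        \<le> 40 * (real (card Sts) * real (card Acts) * real H / Min (\<mu> ` Sts))
             * (1 + ln (real (card Sts) * real (card Acts) * real H * real K / \<delta>))"
    (is "real (card ?non_good) \<le> _")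
proof (cases "K = 0")
  case True
  then show ?thesis
    using \<mu>_min by simp
next
  case False
  define m where "m = Min (\<mu> ` Sts)"
  define L where "L = real H * ln (9 * real (card Sts) * real (card Acts) / \<delta>)"
  define f where "f s a i = (\<Sum>t\<in>{1..H}. occ Sts p0 P (\<pi> i) t s a)" for s a i
  have "m \<le> 1"
    using Min_image_le_sum[of Sts \<mu>] assms by (simp add: m_def)
  have f_nonneg: "f s a i \<ge> 0" if "s \<in> Sts" for s a i
    unfolding f_def using sum_occ_state_independent[OF \<mu>_sum p0 P] \<pi>_range \<mu>_nonneg that
    by simp
  have f_ge: "f s (\<pi> i s t) i \<ge> m" if "s \<in> Sts" and "t \<in> {1..H}" for s t i
    unfolding f_def m_def using assms that by (intro sum_occ_ge_Min) auto
  have "9 * real (card Sts) * real (card Acts) \<ge> 1 * 1 * 1"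
    using assms by (intro mult_mono) (auto simp: Suc_le_eq card_gt_0_iff)
  then have "9 * real (card Sts) * real (card Acts) / \<delta> \<ge> 1"
    using \<open>0 < \<delta>\<close> \<open>\<delta> \<le> 1\<close> by (simp add: le_divide_eq_1)
  then have "L \<ge> 0"
    by (simp add: L_def)
  have "?non_good \<subseteq> {k\<in>{1..K}. \<exists>s\<in>Sts. \<exists>t\<in>{1..H}. (\<Sum>i\<in>{1..<k}. f s (\<pi> k s t) i) < 4 * L}"
    (is "_ \<subseteq> ?small")
  proof
    fix k
    assume "k \<in> ?non_good"
    then obtain s t where "k \<in> {1..K}" and "s \<in> Sts" and "t \<in> {1..H}"
      and "real (n k s (\<pi> k s t)) < 1/4 * (\<Sum>i\<in>{1..<k}. f s (\<pi> k s t) i)"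
      unfolding f_def by blast
    moreover have "real (n k s (\<pi> k s t)) \<ge> 1/2 * (\<Sum>i\<in>{1..<k}. f s (\<pi> k s t) i) - L"
      using visits_ge \<pi>_range \<open>s \<in> Sts\<close> \<open>t \<in> {1..H}\<close> unfolding f_def L_def by blast
    ultimately have "(\<Sum>i\<in>{1..<k}. f s (\<pi> k s t) i) < 4 * L"
      by linarith
    with \<open>k \<in> {1..K}\<close> \<open>s \<in> Sts\<close> \<open>t \<in> {1..H}\<close> show "k \<in> ?small"
      by blast
  qed
  then have "real (card ?non_good) \<le> real (card ?small)"
    by (intro of_nat_mono card_mono) auto
  also have "\<dots> \<le> real (card Sts) * real (card Acts) * (4 * L / m + 1)"
    using assms f_nonneg f_ge \<open>L \<ge> 0\<close>
    by (intro card_episodes_with_small_prefix_mass_le) (auto simp: m_def)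
  also have "\<dots> \<le> 40 * (real (card Sts) * real (card Acts) * real H / m)
             * (1 + ln (real (card Sts) * real (card Acts) * real H * real K / \<delta>))"
    unfolding L_def using assms \<open>m \<le> 1\<close> False
    by (intro count_bound_le_polylog) (auto simp: m_def Suc_le_eq card_gt_0_iff)
  finally show ?thesis
    by (simp add: m_def)
qed

theorem lemma11:
  "\<exists>(C::real) (p::nat). \<forall>(Sts::nat set) (Acts::nat set) (\<mu>::nat \<Rightarrow> real) (p0::nat \<Rightarrow> real)
      (P::nat \<Rightarrow> nat \<Rightarrow> nat \<Rightarrow> real) (H::nat) (K::nat) (\<delta>::real)
      (\<pi>::nat \<Rightarrow> nat \<Rightarrow> nat \<Rightarrow> nat) (n::nat \<Rightarrow> nat \<Rightarrow> nat \<Rightarrow> nat).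
    finite Sts \<and> Sts \<noteq> {} \<and> finite Acts \<and> Acts \<noteq> {} \<and>
    (\<forall>s\<in>Sts. \<mu> s \<ge> 0) \<and> (\<Sum>s\<in>Sts. \<mu> s) = 1 \<and> Min (\<mu> ` Sts) > 0 \<and>
    (\<forall>s\<in>Sts. p0 s = \<mu> s) \<and> (\<forall>s\<in>Sts. \<forall>a\<in>Acts. \<forall>s'\<in>Sts. P s a s' = \<mu> s') \<and>
    (\<forall>k s t. s \<in> Sts \<longrightarrow> t \<in> {1..H} \<longrightarrow> \<pi> k s t \<in> Acts) \<and>
    H \<ge> 1 \<and> 0 < \<delta> \<and> \<delta> \<le> 1 \<and>
    (\<forall>k. \<forall>s\<in>Sts. \<forall>a\<in>Acts. real (n k s a) \<ge>
        1/2 * (\<Sum>i\<in>{1..<k}. \<Sum>t\<in>{1..H}. occ Sts p0 P (\<pi> i) t s a)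
        - real H * ln (9 * real (card Sts) * real (card Acts) / \<delta>))
    \<longrightarrow> real (card {k\<in>{1..K}. \<exists>s\<in>Sts. \<exists>t\<in>{1..H}.
            real (n k s (\<pi> k s t)) <
              1/4 * (\<Sum>i\<in>{1..<k}. \<Sum>\<tau>\<in>{1..H}. occ Sts p0 P (\<pi> i) \<tau> s (\<pi> k s t))})
        \<le> C * (real (card Sts) * real (card Acts) * real H / Min (\<mu> ` Sts))
             * (1 + ln (real (card Sts) * real (card Acts) * real H * real K / \<delta>)) ^ p"
  by (intro exI[of _ 40] exI[of _ 1] allI impI)
    (simp only: power_one_right, elim conjE, rule card_non_good_episodes_le)

end
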